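(* A family $\mathcal{F}\subseteq 2^{[n]}$ is s-extremal if and only if there exists a Sperner family $\mathcal{S}\subseteq 2^{[n]}$ such that $\mathcal{F}$ is $\mathcal{S}$-extremal.
   Context: $[n]=\{1,\dots,n\}$. A Sperner family is a family of sets none of which is contained in another. $\mathcal{F}$ shatters $S$ if $\{F\cap S:F\in\mathcal{F}\}=2^S$; $\mathrm{Sh}(\mathcal{F})$ is the family of shattered sets; $\mathcal{F}$ is s-extremal if $|\mathrm{Sh}(\mathcal{F})|=|\mathcal{F}|$. $\mathcal{H}(\mathcal{S})=\{F\subseteq[n]: \text{no } S\in\mathcal{S} \text{ satisfies } S\subseteq F\}$. For a Sperner family $\mathcal{S}$, a family $\mathcal{F}\subseteq 2^{[n]}$ is called $\mathcal{S}$-extremal if $\mathcal{F}$ shatters no element of $\mathcal{S}$ and $|\mathcal{F}|=|\mathcal{H}(\mathcal{S})|$. *)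

theory Defs
  imports Main
begin

definition sperner :: "'a set set \<Rightarrow> bool" where
  "sperner S \<longleftrightarrow> (\<forall>A\<in>S. \<forall>B\<in>S. A \<subseteq> B \<longrightarrow> A = B)"

definition shatters :: "'a set set \<Rightarrow> 'a set \<Rightarrow> bool" where
  "shatters F S \<longleftrightarrow> {A \<inter> S | A. A \<in> F} = Pow S"

definition Sh :: "'a set set \<Rightarrow> 'a set set" where
  "Sh F = {S. shatters F S}"

definition s_extremal :: "'a set set \<Rightarrow> bool" where
  "s_extremal F \<longleftrightarrow> card (Sh F) = card F"

definition H :: "nat \<Rightarrow> nat set set \<Rightarrow> nat set set" where
  "H n S = {A. A \<subseteq> {1..n} \<and> \<not> (\<exists>T\<in>S. T \<subseteq> A)}"

definition S_extremal :: "nat \<Rightarrow> nat set set \<Rightarrow> nat set set \<Rightarrow> bool" where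
  "S_extremal n S F \<longleftrightarrow> (\<forall>T\<in>S. \<not> shatters F T) \<and> card F = card (H n S)"

end

theory Submission
  imports Defs
begin

(* Pajor's inequality |F| <= |Sh F| holds for every family: splitting F at a point x into
   the sets D avoiding x and the link L, |F| = |D \<union> L| + |D \<inter> L|, and F shatters every
   set shattered by D \<union> L as well as T + x for every T shattered by D \<inter> L. Shattered sets form a
   down-set, so Sh F = H(S) for the Sperner family S of minimal non-shattered subsets
   of [n]; hence an s-extremal family is S-extremal. Conversely, if F shatters no member
   of S then Sh F is contained in H(S), so |Sh F| <= |H(S)| = |F| <= |Sh F|. *)

lemma shatters_subset:
  assumes "shatters F A" and "T \<subseteq> A"
  shows "shatters F T"
proof -
  have "B \<in> {C \<inter> T |C. C \<in> F}" if "B \<subseteq> T" for B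
  proof -
    have "B \<in> {C \<inter> A |C. C \<in> F}"
      using assms \<open>B \<subseteq> T\<close> by (auto simp: shatters_def)
    then obtain C where "C \<in> F" "B = C \<inter> A" by blast
    then have "B = C \<inter> T" using \<open>B \<subseteq> T\<close> \<open>T \<subseteq> A\<close> by blast
    with \<open>C \<in> F\<close> show ?thesis by blast
  qed
  then show ?thesis by (auto simp: shatters_def)
qed

lemma Sh_subset_Pow_Union: "Sh F \<subseteq> Pow (\<Union>F)"
proof
  fix S assume "S \<in> Sh F"
  then have "S \<in> {A \<inter> S |A. A \<in> F}" by (simp add: Sh_def shatters_def)
  then show "S \<in> Pow (\<Union>F)" by blast
qed

lemma shatters_empty_iff: "shatters F {} \<longleftrightarrow> F \<noteq> {}"
  by (auto simp: shatters_def)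

definition deletion :: "'a \<Rightarrow> 'a set set \<Rightarrow> 'a set set" where
  "deletion x F = {A \<in> F. x \<notin> A}"

definition link :: "'a \<Rightarrow> 'a set set \<Rightarrow> 'a set set" where
  "link x F = (\<lambda>A. A - {x}) ` {A \<in> F. x \<in> A}"

lemma card_deletion_link:
  assumes "finite F"
  shows "card F = card (deletion x F) + card (link x F)"
proof -
  have "inj_on (\<lambda>A. A - {x}) {A \<in> F. x \<in> A}" by (auto intro: inj_onI)
  then have "card (link x F) = card {A \<in> F. x \<in> A}" by (simp add: link_def card_image)
  moreover have "card (deletion x F \<union> {A \<in> F. x \<in> A}) =
      card (deletion x F) + card {A \<in> F. x \<in> A}"
    using assms by (intro card_Un_disjoint) (auto simp: deletion_def)
  moreover have "deletion x F \<union> {A \<in> F. x \<in> A} = F" by (auto simp: deletion_def)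
  ultimately show ?thesis by simp
qed

lemma notin_Union_deletion_link: "x \<notin> \<Union>(deletion x F \<union> link x F)"
  by (auto simp: deletion_def link_def)

lemma shatters_deletion_Un_link:
  assumes "shatters (deletion x F \<union> link x F) T"
  shows "shatters F T"
proof -
  have "x \<notin> T"
    using assms Sh_subset_Pow_Union notin_Union_deletion_link by (fastforce simp: Sh_def)
  \<comment> \<open>Away from x, a set and its image in the link have the same trace.\<close>
  then have "{A \<inter> T |A. A \<in> deletion x F \<union> link x F} \<subseteq> {A \<inter> T |A. A \<in> F}"
    by (fastforce simp: deletion_def link_def)
  with assms show ?thesis by (auto simp: shatters_def)
qed

lemma shatters_deletion_Int_link:
  assumes "shatters (deletion x F \<inter> link x F) T" and "x \<notin> T"
  shows "shatters F (insert x T)"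
proof -
  have "B \<in> {C \<inter> insert x T |C. C \<in> F}" if B: "B \<subseteq> insert x T" for B
  proof -
    have "B - {x} \<in> {A \<inter> T |A. A \<in> deletion x F \<inter> link x F}"
      using assms(1) B unfolding shatters_def by blast
    then obtain A where A: "A \<in> deletion x F" "A \<in> link x F" "B - {x} = A \<inter> T" by blast
    have "x \<notin> A" "A \<in> F" using A(1) by (auto simp: deletion_def)
    obtain C where "C \<in> F" "x \<in> C" "A = C - {x}" using A(2) by (auto simp: link_def)
    then have "insert x A \<in> F" by (simp add: insert_absorb)
    show ?thesis
    proof (cases "x \<in> B")
      case True
      then have "B = insert x A \<inter> insert x T" using A(3) B by auto
      with \<open>insert x A \<in> F\<close> show ?thesis by blast
    next
      case False
      then have "B = A \<inter> insert x T" using A(3) B \<open>x \<notin> A\<close> by auto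
      with \<open>A \<in> F\<close> show ?thesis by blast
    qed
  qed
  then show ?thesis unfolding shatters_def by blast
qed

theorem card_le_card_Sh:
  assumes "finite X" and "F \<subseteq> Pow X"
  shows "card F \<le> card (Sh F)"
  using assms
proof (induction X arbitrary: F rule: finite_induct)
  case empty
  show ?case
  proof (cases "F = {}")
    case False
    with empty have "F = {{}}" by auto
    moreover have "{} \<in> Sh F" using False by (simp add: Sh_def shatters_empty_iff)
    moreover have "finite (Sh F)"
      using Sh_subset_Pow_Union[of F] \<open>F = {{}}\<close> by (simp add: finite_subset)
    ultimately show ?thesis by (simp add: Suc_le_eq card_gt_0_iff) blast
  qed simp
next
  case (insert x X F)
  let ?D = "deletion x F" and ?L = "link x F"
  have "\<Union>(?D \<union> ?L) \<subseteq> X"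
    using insert.prems by (auto simp: deletion_def link_def)
  then have Sh_Pow: "Sh (?D \<union> ?L) \<subseteq> Pow X" "Sh (?D \<inter> ?L) \<subseteq> Pow X"
    using Sh_subset_Pow_Union[of "?D \<union> ?L"] Sh_subset_Pow_Union[of "?D \<inter> ?L"] by blast+
  have "finite F"
    using insert.hyps(1) insert.prems by (auto intro: finite_subset)
  have "\<Union>F \<subseteq> insert x X" using insert.prems by blast
  then have "finite (Sh F)"
    using insert.hyps(1) Sh_subset_Pow_Union[of F] by (auto intro: finite_subset)
  have "card F = card ?D + card ?L"
    using \<open>finite F\<close> by (rule card_deletion_link)
  also have "\<dots> = card (?D \<union> ?L) + card (?D \<inter> ?L)"
    using \<open>finite F\<close> by (intro card_Un_Int) (auto simp: deletion_def link_def)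
  also have "\<dots> \<le> card (Sh (?D \<union> ?L)) + card (Sh (?D \<inter> ?L))"
    using \<open>\<Union>(?D \<union> ?L) \<subseteq> X\<close> by (intro add_mono insert.IH) auto
  also have "\<dots> = card (Sh (?D \<union> ?L) \<union> insert x ` Sh (?D \<inter> ?L))"
  proof -
    have "inj_on (insert x) (Sh (?D \<inter> ?L))"
    proof (rule inj_onI)
      fix a b assume "a \<in> Sh (?D \<inter> ?L)" "b \<in> Sh (?D \<inter> ?L)" "insert x a = insert x b"
      moreover have "x \<notin> a" "x \<notin> b" using calculation(1,2) Sh_Pow(2) insert.hyps(2) by auto
      ultimately show "a = b" by (metis Diff_insert_absorb)
    qed
    moreover have "finite (Sh (?D \<union> ?L))" "finite (Sh (?D \<inter> ?L))"
      using Sh_Pow insert.hyps(1) by (auto intro: finite_subset)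
    moreover have "Sh (?D \<union> ?L) \<inter> insert x ` Sh (?D \<inter> ?L) = {}"
      using Sh_Pow(1) insert.hyps(2) by blast
    ultimately show ?thesis by (simp add: card_Un_disjoint card_image)
  qed
  also have "\<dots> \<le> card (Sh F)"
  proof (rule card_mono[OF \<open>finite (Sh F)\<close>])
    have "insert x T \<in> Sh F" if "T \<in> Sh (?D \<inter> ?L)" for T
    proof -
      have "x \<notin> T" using that Sh_Pow(2) insert.hyps(2) by blast
      with that show ?thesis using shatters_deletion_Int_link by (simp add: Sh_def)
    qed
    then show "Sh (?D \<union> ?L) \<union> insert x ` Sh (?D \<inter> ?L) \<subseteq> Sh F"
      using shatters_deletion_Un_link by (auto simp: Sh_def)
  qed
  finally show ?case .
qed

lemma exists_minimal_nonshattered_subset: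
  assumes "finite A" and "\<not> shatters F A"
  obtains T where "T \<subseteq> A" "\<not> shatters F T" "\<And>U. U \<subset> T \<Longrightarrow> shatters F U"
proof -
  let ?N = "{T. T \<subseteq> A \<and> \<not> shatters F T}"
  have N: "finite ?N" "A \<in> ?N" using assms by simp_all
  obtain T where T: "T \<in> ?N" and min: "\<forall>U \<in> ?N. U \<le> T \<longrightarrow> T = U"
    using finite_has_minimal2[OF N] by blast
  show ?thesis
  proof (rule that)
    show "T \<subseteq> A" "\<not> shatters F T" using T by simp_all
  next
    fix U assume "U \<subset> T"
    then have "U \<notin> ?N" using min by auto
    with \<open>U \<subset> T\<close> \<open>T \<in> ?N\<close> show "shatters F U" by auto
  qed
qed

definition minimal_nonshattered :: "nat \<Rightarrow> nat set set \<Rightarrow> nat set set" where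
  "minimal_nonshattered n F =
     {T \<in> Pow {1..n}. \<not> shatters F T \<and> (\<forall>U \<subset> T. shatters F U)}"

lemma sperner_minimal_nonshattered: "sperner (minimal_nonshattered n F)"
  unfolding sperner_def minimal_nonshattered_def by blast

lemma Sh_subset_H:
  assumes "Sh F \<subseteq> Pow {1..n}" and "\<forall>T \<in> S. \<not> shatters F T"
  shows "Sh F \<subseteq> H n S"
proof
  fix A assume "A \<in> Sh F"
  then have "A \<subseteq> {1..n}" "shatters F A" using assms(1) by (auto simp: Sh_def)
  moreover have "\<not> T \<subseteq> A" if "T \<in> S" for T
    using that assms(2) shatters_subset \<open>shatters F A\<close> by blast
  ultimately show "A \<in> H n S" by (auto simp: H_def)
qed

lemma H_minimal_nonshattered:
  assumes "Sh F \<subseteq> Pow {1..n}"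
  shows "H n (minimal_nonshattered n F) = Sh F"
proof
  show "Sh F \<subseteq> H n (minimal_nonshattered n F)"
    using assms by (rule Sh_subset_H) (simp add: minimal_nonshattered_def)
next
  show "H n (minimal_nonshattered n F) \<subseteq> Sh F"
  proof
    fix A assume A: "A \<in> H n (minimal_nonshattered n F)"
    then have "A \<subseteq> {1..n}" by (simp add: H_def)
    show "A \<in> Sh F"
    proof (rule ccontr)
      assume "A \<notin> Sh F"
      then have "\<not> shatters F A" by (simp add: Sh_def)
      moreover have "finite A" using \<open>A \<subseteq> {1..n}\<close> by (rule finite_subset) simp
      ultimately obtain T where
        "T \<subseteq> A" "\<not> shatters F T" "\<And>U. U \<subset> T \<Longrightarrow> shatters F U"
        by (metis exists_minimal_nonshattered_subset)
      with \<open>A \<subseteq> {1..n}\<close> have "T \<in> minimal_nonshattered n F"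
        by (auto simp: minimal_nonshattered_def)
      with A \<open>T \<subseteq> A\<close> show False by (auto simp: H_def)
    qed
  qed
qed

theorem proposition13:
  fixes n :: nat and F :: "nat set set"
  assumes "F \<subseteq> Pow {1..n}"
  shows "s_extremal F \<longleftrightarrow> (\<exists>S. S \<subseteq> Pow {1..n} \<and> sperner S \<and> S_extremal n S F)"
proof -
  have Sh_Pow: "Sh F \<subseteq> Pow {1..n}"
    using assms Sh_subset_Pow_Union[of F] by blast
  have pajor: "card F \<le> card (Sh F)"
    using card_le_card_Sh[OF _ assms] by simp
  show ?thesis
  proof
    assume "s_extremal F"
    let ?S = "minimal_nonshattered n F"
    have "S_extremal n ?S F"
      using \<open>s_extremal F\<close> H_minimal_nonshattered[OF Sh_Pow]
      by (simp add: S_extremal_def s_extremal_def minimal_nonshattered_def)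
    moreover have "?S \<subseteq> Pow {1..n}" by (auto simp: minimal_nonshattered_def)
    ultimately show "\<exists>S. S \<subseteq> Pow {1..n} \<and> sperner S \<and> S_extremal n S F"
      using sperner_minimal_nonshattered by blast
  next
    assume "\<exists>S. S \<subseteq> Pow {1..n} \<and> sperner S \<and> S_extremal n S F"
    then obtain S where S: "S_extremal n S F" by blast
    have "finite (H n S)" by (rule finite_subset[of _ "Pow {1..n}"]) (auto simp: H_def)
    then have "card (Sh F) \<le> card (H n S)"
      using S Sh_subset_H[OF Sh_Pow] by (intro card_mono) (auto simp: S_extremal_def)
    with S pajor show "s_extremal F" by (simp add: S_extremal_def s_extremal_def)
  qed
qed

end
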